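(* Let $\lambda,\beta,\epsilon>0$ and $\gamma>0$ with $0<\epsilon<\gamma^2\beta/4$, and let $\|\cdot\|_*$ be the norm defined in the context. (i) There exists $\eta_1>0$ such that for any fluid model $(y,x)$, at any regular point $t$ with $x(t)>-\lambda/\beta$, $\frac{d}{dt}\|(y(t),x(t))\|_*\le-\eta_1\|(y(t),x(t))\|_*$. (ii) There exists $\eta_2>0$ such that for any fluid model, at any regular point $t$ with $x(t)=-\lambda/\beta$ and $y(t)\ge\gamma\lambda/\epsilon$, $\frac{d}{dt}\|(y(t),x(t))\|_*\le-\eta_2$. (iii) There exist $\eta>0$ and $C>0$ such that for any fluid model, at any regular point $t$, $\|(y(t),x(t))\|_*\ge C$ implies $\frac{d}{dt}\|(y(t),x(t))\|_*\le-\eta$.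
   Context: Let $A=\begin{bmatrix}0&-\epsilon\\ \beta&-\gamma\beta\end{bmatrix}$; under $0<\epsilon<\gamma^2\beta/4$, $A$ has two distinct negative eigenvalues $-\nu_2<-\nu_1<0$. Let $v_i=(\beta/\nu_i,-1)$, $i=1,2$ (row vectors with $v_iA=-\nu_iv_i$). For $u\in\mathbb{R}^2$ write $u=\alpha_1v_1+\alpha_2v_2$ and set $\|u\|_*=(\alpha_1^2+\alpha_2^2)^{1/2}$. A fluid model is a locally Lipschitz continuous trajectory $(y(t),x(t))$, $t\ge0$, such that $x(t)\ge-\lambda/\beta$ for all $t$ and, at every regular point $t$: if $x(t)>-\lambda/\beta$ then $y'(t)=\beta x(t)$, $x'(t)=-\gamma\beta x(t)-\epsilon y(t)$; if $x(t)=-\lambda/\beta$ then $y'(t)=-\lambda$, $x'(t)=[\gamma\lambda-\epsilon y(t)]\vee0$. A point $t$ is regular if for every nonempty subset of $\{y,x\}$ the derivatives of the pointwise maximum and minimum over that subset exist at $t$. *)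

theory Defs
  imports "HOL-Analysis.Analysis"
begin

text \<open>The eigenvalues of A = [[0, -eps], [beta, -gam*beta]] are the roots of
  s^2 + gam*beta*s + eps*beta = 0, i.e. -nu2 < -nu1 < 0 with the values below.\<close>

definition nu1 :: "real \<Rightarrow> real \<Rightarrow> real \<Rightarrow> real" where
  "nu1 beta eps gam = (gam * beta - sqrt ((gam * beta)\<^sup>2 - 4 * eps * beta)) / 2"

definition nu2 :: "real \<Rightarrow> real \<Rightarrow> real \<Rightarrow> real" where
  "nu2 beta eps gam = (gam * beta + sqrt ((gam * beta)\<^sup>2 - 4 * eps * beta)) / 2"

text \<open>Left eigenvectors v_i = (beta/nu_i, -1).\<close>
definition vvec :: "real \<Rightarrow> real \<Rightarrow> (real \<times> real)" where
  "vvec beta nu = (beta / nu, -1)"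

definition star_norm :: "real \<Rightarrow> real \<Rightarrow> real \<Rightarrow> real \<times> real \<Rightarrow> real" where
  "star_norm beta eps gam u =
     (let (a1, a2) = (THE (a1, a2). u = a1 *\<^sub>R vvec beta (nu1 beta eps gam)
                                       + a2 *\<^sub>R vvec beta (nu2 beta eps gam))
      in sqrt (a1\<^sup>2 + a2\<^sup>2))"

definition regular_point :: "(real \<Rightarrow> real) \<Rightarrow> (real \<Rightarrow> real) \<Rightarrow> real \<Rightarrow> bool" where
  "regular_point y x t \<longleftrightarrow> 0 \<le> t \<and>
     y differentiable (at t within {0..}) \<and>
     x differentiable (at t within {0..}) \<and>
     (\<lambda>s. max (y s) (x s)) differentiable (at t within {0..}) \<and>
     (\<lambda>s. min (y s) (x s)) differentiable (at t within {0..})"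

definition locally_lipschitz_traj :: "(real \<Rightarrow> real) \<Rightarrow> (real \<Rightarrow> real) \<Rightarrow> bool" where
  "locally_lipschitz_traj y x \<longleftrightarrow>
     (\<forall>T\<ge>0. \<exists>L. L-lipschitz_on {0..T} (\<lambda>t. (y t, x t)))"

definition fluid_model ::
  "real \<Rightarrow> real \<Rightarrow> real \<Rightarrow> real \<Rightarrow> (real \<Rightarrow> real) \<Rightarrow> (real \<Rightarrow> real) \<Rightarrow> bool" where
  "fluid_model lam beta eps gam y x \<longleftrightarrow>
     locally_lipschitz_traj y x \<and>
     (\<forall>t\<ge>0. x t \<ge> - lam / beta) \<and>
     (\<forall>t. regular_point y x t \<longrightarrow>
        (x t > - lam / beta \<longrightarrow>
           (y has_real_derivative (beta * x t)) (at t within {0..}) \<and>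
           (x has_real_derivative (- gam * beta * x t - eps * y t)) (at t within {0..})) \<and>
        (x t = - lam / beta \<longrightarrow>
           (y has_real_derivative (- lam)) (at t within {0..}) \<and>
           (x has_real_derivative (max (gam * lam - eps * y t) 0)) (at t within {0..})))"

end

theory Submission
  imports Defs
begin

text \<open>In the coordinates \<open>(\<alpha>\<^sub>1, \<alpha>\<^sub>2)\<close> of \<open>u = (y, x)\<close> with respect to the left eigenvectors
  \<open>v\<^sub>1, v\<^sub>2\<close> of \<open>A\<close>, the linear dynamics \<open>u' = u A\<close> decouple into \<open>\<alpha>\<^sub>i' = - \<nu>\<^sub>i \<alpha>\<^sub>i\<close>, so
  \<open>\<parallel>u\<parallel>\<^sub>* = |\<alpha>|\<close> decays at rate at least \<open>\<nu>\<^sub>1\<close>; this also covers the wall \<open>x = - \<lambda>/\<beta>\<close> below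
  \<open>y = \<gamma>\<lambda>/\<epsilon>\<close>, where the reflected dynamics coincide with the linear ones. On the wall above
  that level the velocity is \<open>(- \<lambda>, 0)\<close>, whose coordinates are \<open>c (-1, 1)\<close> with
  \<open>c = \<lambda>\<epsilon>/(\<nu>\<^sub>2 - \<nu>\<^sub>1)\<close>, while there \<open>\<alpha>\<^sub>1 > 0 > \<alpha>\<^sub>2\<close>; hence
  \<open>d|\<alpha>|/dt = - c (\<alpha>\<^sub>1 - \<alpha>\<^sub>2)/|\<alpha>| \<le> - c\<close>. Part (iii) combines both bounds with \<open>C = 1\<close>.\<close>

lemma norm_has_real_derivative:
  fixes f :: "real \<Rightarrow> 'a::real_inner"
  assumes f: "(f has_vector_derivative f') (at t within S)" and "f t \<noteq> 0 \<or> f' = 0"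
  shows "((\<lambda>s. norm (f s)) has_real_derivative inner (f t) f' / norm (f t)) (at t within S)"
proof (cases "f t = 0")
  case True
  \<comment> \<open>the stated value is then \<open>0 / 0 = 0\<close>, correct because \<open>f' = 0\<close> makes \<open>norm (f s)\<close> an \<open>o(s - t)\<close>\<close>
  with assms have "f' = 0" by simp
  with f True show ?thesis
    by (simp add: has_real_derivative_iff_has_vector_derivative has_vector_derivative_def
        has_derivative_iff_norm)
next
  case False
  have "((\<lambda>s. norm (f s)) has_derivative (\<lambda>h. inner (h *\<^sub>R f') (sgn (f t)))) (at t within S)"
    using has_derivative_compose[OF f[unfolded has_vector_derivative_def] has_derivative_norm[OF False]]
    by (simp add: o_def)
  then show ?thesis
    unfolding has_field_derivative_def
    by (rule has_derivative_eq_rhs) (simp add: fun_eq_iff sgn_div_norm inner_commute field_simps)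
qed

definition eigen_coords :: "real \<Rightarrow> real \<Rightarrow> real \<Rightarrow> real \<times> real \<Rightarrow> real \<times> real" where
  "eigen_coords beta n1 n2 = (\<lambda>(y, x).
     (n1 * (n2 * y + beta * x) / (beta * (n2 - n1)), - n2 * (n1 * y + beta * x) / (beta * (n2 - n1))))"

lemma eigen_coords_has_vector_derivative:
  assumes "(y has_real_derivative Y) (at t within S)" "(x has_real_derivative X) (at t within S)"
  shows "((\<lambda>s. eigen_coords beta n1 n2 (y s, x s)) has_vector_derivative eigen_coords beta n1 n2 (Y, X))
    (at t within S)"
  unfolding eigen_coords_def prod.case
  by (intro has_vector_derivative_Pair has_real_derivative_iff_has_vector_derivative[THEN iffD1])
    (auto intro!: DERIV_cdivide derivative_eq_intros assms simp: algebra_simps)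

lemma eigen_decomposition_iff:
  assumes "beta \<noteq> 0" "n1 \<noteq> 0" "n2 \<noteq> 0" "n1 \<noteq> n2"
  shows "u = a1 *\<^sub>R vvec beta n1 + a2 *\<^sub>R vvec beta n2 \<longleftrightarrow> (a1, a2) = eigen_coords beta n1 n2 u"
proof -
  have ne: "n2 - n1 \<noteq> 0" using assms by simp
  have "eigen_coords beta n1 n2 (a1 *\<^sub>R vvec beta n1 + a2 *\<^sub>R vvec beta n2) = (a1, a2)"
    using assms ne by (simp add: eigen_coords_def vvec_def field_simps)
  moreover have "fst (eigen_coords beta n1 n2 u) *\<^sub>R vvec beta n1
      + snd (eigen_coords beta n1 n2 u) *\<^sub>R vvec beta n2 = u"
    using assms ne by (cases u) (simp add: eigen_coords_def vvec_def divide_simps, simp add: algebra_simps)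
  ultimately show ?thesis by (metis fst_conv snd_conv)
qed

lemma nu1_nu2_properties:
  assumes "beta > 0" "eps > 0" "gam > 0" "eps < gam\<^sup>2 * beta / 4"
  shows "0 < nu1 beta eps gam" "nu1 beta eps gam < nu2 beta eps gam"
    "nu1 beta eps gam + nu2 beta eps gam = gam * beta"
    "nu1 beta eps gam * nu2 beta eps gam = eps * beta"
proof -
  define d where "d = sqrt ((gam * beta)\<^sup>2 - 4 * eps * beta)"
  have "0 < (gam * beta)\<^sup>2 - 4 * eps * beta" "(gam * beta)\<^sup>2 - 4 * eps * beta < (gam * beta)\<^sup>2"
    using assms by (auto simp: field_simps power2_eq_square)
  moreover have "sqrt ((gam * beta)\<^sup>2) = gam * beta"
    using assms by simp
  ultimately have "0 < d" "d < gam * beta" "d\<^sup>2 = (gam * beta)\<^sup>2 - 4 * eps * beta"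
    unfolding d_def by (metis real_sqrt_gt_zero, metis real_sqrt_less_mono, simp)
  then show "0 < nu1 beta eps gam" "nu1 beta eps gam < nu2 beta eps gam"
    "nu1 beta eps gam + nu2 beta eps gam = gam * beta"
    "nu1 beta eps gam * nu2 beta eps gam = eps * beta"
    unfolding nu1_def nu2_def d_def[symmetric] by (auto simp: field_simps power2_eq_square)
qed

lemma star_norm_eq_norm_eigen_coords:
  assumes "beta \<noteq> 0" "nu1 beta eps gam \<noteq> 0" "nu2 beta eps gam \<noteq> 0" "nu1 beta eps gam \<noteq> nu2 beta eps gam"
  shows "star_norm beta eps gam u = norm (eigen_coords beta (nu1 beta eps gam) (nu2 beta eps gam) u)"
proof -
  have "(THE (a1, a2). u = a1 *\<^sub>R vvec beta (nu1 beta eps gam) + a2 *\<^sub>R vvec beta (nu2 beta eps gam))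
      = eigen_coords beta (nu1 beta eps gam) (nu2 beta eps gam) u"
    using eigen_decomposition_iff[OF assms] by (intro the_equality) auto
  then show ?thesis
    by (cases "eigen_coords beta (nu1 beta eps gam) (nu2 beta eps gam) u") (simp add: star_norm_def norm_Pair)
qed

lemma eigen_coords_linear_field:
  assumes "beta \<noteq> 0" "n1 \<noteq> n2" "n1 + n2 = gam * beta" "n1 * n2 = eps * beta"
    and "eigen_coords beta n1 n2 (y, x) = (a1, a2)"
  shows "eigen_coords beta n1 n2 (beta * x, - gam * beta * x - eps * y) = (- n1 * a1, - n2 * a2)"
proof -
  have field: "- gam * beta * x - eps * y = - (n1 + n2) * x - n1 * n2 * y / beta"
    using assms(1,3,4) by (simp add: field_simps)
  have a: "a1 = n1 * (n2 * y + beta * x) / (beta * (n2 - n1))"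
    "a2 = - n2 * (n1 * y + beta * x) / (beta * (n2 - n1))"
    using assms(5) by (auto simp: eigen_coords_def)
  have "beta * (n2 - n1) \<noteq> 0" using assms(1,2) by simp
  then show ?thesis
    unfolding field a eigen_coords_def using assms(1) by (simp add: field_simps)
qed

lemma eigen_coords_wall_signs:
  assumes "beta > 0" "0 < n1" "n1 < n2" "0 < lam" "lam < n1 * y"
    and "eigen_coords beta n1 n2 (y, - lam / beta) = (a1, a2)"
  shows "0 < a1" "a2 < 0"
proof -
  have "0 < y" using assms(2,4,5) zero_less_mult_pos[of n1 y] by linarith
  then have "lam < n2 * y"
    using assms(5) mult_strict_right_mono[OF assms(3), of y] by linarith
  then have "0 < n1 * (n2 * y - lam)" "0 < n2 * (n1 * y - lam)"
    using assms(2,3,5) by simp_all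
  moreover have "0 < beta * (n2 - n1)" using assms(1,3) by simp
  ultimately show "0 < a1" "a2 < 0"
    using assms(1,6) by (auto simp: eigen_coords_def divide_neg_pos)
qed

lemma eigen_norm_linear_field_derivative:
  fixes y x :: "real \<Rightarrow> real"
  assumes "beta \<noteq> 0" "n1 < n2" "n1 + n2 = gam * beta" "n1 * n2 = eps * beta"
    and "(y has_real_derivative beta * x t) (at t within S)"
    and "(x has_real_derivative - gam * beta * x t - eps * y t) (at t within S)"
  shows "\<exists>D. ((\<lambda>s. norm (eigen_coords beta n1 n2 (y s, x s))) has_real_derivative D) (at t within S)
    \<and> D \<le> - n1 * norm (eigen_coords beta n1 n2 (y t, x t))"
proof -
  obtain a1 a2 where a: "eigen_coords beta n1 n2 (y t, x t) = (a1, a2)" by fastforce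
  have v: "eigen_coords beta n1 n2 (beta * x t, - gam * beta * x t - eps * y t) = (- n1 * a1, - n2 * a2)"
    using eigen_coords_linear_field[OF assms(1) _ assms(3,4) a] assms(2) by simp
  have dv: "((\<lambda>s. eigen_coords beta n1 n2 (y s, x s)) has_vector_derivative (- n1 * a1, - n2 * a2))
      (at t within S)"
    unfolding v[symmetric] by (rule eigen_coords_has_vector_derivative[OF assms(5,6)])
  have D: "((\<lambda>s. norm (eigen_coords beta n1 n2 (y s, x s))) has_real_derivative
      inner (a1, a2) (- n1 * a1, - n2 * a2) / norm (a1, a2)) (at t within S)"
    using norm_has_real_derivative[OF dv] a by (auto simp: prod_eq_iff)
  have "inner (a1, a2) (- n1 * a1, - n2 * a2) \<le> - n1 * (norm (a1, a2))\<^sup>2"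
    using mult_right_mono[OF less_imp_le[OF assms(2)], of "a2\<^sup>2"]
    by (simp add: norm_Pair algebra_simps power2_eq_square)
  then have "inner (a1, a2) (- n1 * a1, - n2 * a2) / norm (a1, a2) \<le> - n1 * norm (a1, a2)"
    by (cases "norm (a1, a2) = 0") (simp_all add: divide_le_eq power2_eq_square)
  with D a show ?thesis by auto
qed

lemma eigen_norm_wall_derivative:
  fixes y x :: "real \<Rightarrow> real"
  assumes "beta > 0" "0 < n1" "n1 < n2" "0 < lam" "lam < n1 * y t" "x t = - lam / beta"
    and "(y has_real_derivative - lam) (at t within S)" "(x has_real_derivative 0) (at t within S)"
  shows "\<exists>D. ((\<lambda>s. norm (eigen_coords beta n1 n2 (y s, x s))) has_real_derivative D) (at t within S)
    \<and> D \<le> - (lam * n1 * n2 / (beta * (n2 - n1)))"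
proof -
  define c where "c = lam * n1 * n2 / (beta * (n2 - n1))"
  obtain a1 a2 where a: "eigen_coords beta n1 n2 (y t, x t) = (a1, a2)" by fastforce
  have signs: "0 < a1" "a2 < 0"
    using eigen_coords_wall_signs[OF assms(1-5)] a assms(6) by auto
  have v: "eigen_coords beta n1 n2 (- lam, 0) = (- c, c)"
    unfolding c_def eigen_coords_def by simp
  have dv: "((\<lambda>s. eigen_coords beta n1 n2 (y s, x s)) has_vector_derivative (- c, c)) (at t within S)"
    unfolding v[symmetric] by (rule eigen_coords_has_vector_derivative[OF assms(7,8)])
  have D: "((\<lambda>s. norm (eigen_coords beta n1 n2 (y s, x s))) has_real_derivative
      inner (a1, a2) (- c, c) / norm (a1, a2)) (at t within S)"
    using norm_has_real_derivative[OF dv] a signs by (auto simp: prod_eq_iff)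
  have N: "0 < norm (a1, a2)" "norm (a1, a2) \<le> a1 - a2"
    using signs norm_Pair_le[of a1 a2] by (auto simp: prod_eq_iff)
  have "0 < c" unfolding c_def using assms(1-4) by simp
  then have "c * norm (a1, a2) \<le> c * (a1 - a2)"
    using N(2) by (simp add: mult_left_mono)
  then have "inner (a1, a2) (- c, c) / norm (a1, a2) \<le> - c"
    using N(1) by (simp add: divide_le_eq algebra_simps)
  with D show ?thesis unfolding c_def by auto
qed

lemma fluid_model_linear_regime:
  assumes "beta > 0" "eps > 0" "fluid_model lam beta eps gam y x" "regular_point y x t"
    and "- lam / beta < x t \<or> (x t = - lam / beta \<and> y t \<le> gam * lam / eps)"
  shows "(y has_real_derivative beta * x t) (at t within {0..})"
    "(x has_real_derivative - gam * beta * x t - eps * y t) (at t within {0..})"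
proof -
  consider "- lam / beta < x t" | "x t = - lam / beta" "eps * y t \<le> gam * lam"
    using assms(2,5) by (auto simp: field_simps)
  then have "(y has_real_derivative beta * x t) (at t within {0..}) \<and>
      (x has_real_derivative - gam * beta * x t - eps * y t) (at t within {0..})"
  proof cases
    case 1
    then show ?thesis using assms(3,4) unfolding fluid_model_def by blast
  next
    case 2
    then have "beta * x t = - lam" "max (gam * lam - eps * y t) 0 = - gam * beta * x t - eps * y t"
      using assms(1) by auto
    then show ?thesis using assms(3,4) 2(1) unfolding fluid_model_def by metis
  qed
  then show "(y has_real_derivative beta * x t) (at t within {0..})"
    "(x has_real_derivative - gam * beta * x t - eps * y t) (at t within {0..})"
    by auto
qed

lemma fluid_model_wall_regime:
  assumes "eps > 0" "fluid_model lam beta eps gam y x" "regular_point y x t"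
    and "x t = - lam / beta" "gam * lam / eps \<le> y t"
  shows "(y has_real_derivative - lam) (at t within {0..})" "(x has_real_derivative 0) (at t within {0..})"
proof -
  have "max (gam * lam - eps * y t) 0 = 0"
    using assms(1,5) by (simp add: field_simps)
  then show "(y has_real_derivative - lam) (at t within {0..})" "(x has_real_derivative 0) (at t within {0..})"
    using assms(2-4) unfolding fluid_model_def by metis+
qed

lemma fluid_model_regimes:
  assumes "fluid_model lam beta eps gam y x" "regular_point y x t"
  shows "(- lam / beta < x t \<or> (x t = - lam / beta \<and> y t \<le> gam * lam / eps))
      \<or> (x t = - lam / beta \<and> gam * lam / eps \<le> y t)"
  using assms unfolding fluid_model_def regular_point_def by force

lemma star_norm_decay_linear_regime:
  assumes "beta > 0" "eps > 0" "gam > 0" "eps < gam\<^sup>2 * beta / 4"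
    and "fluid_model lam beta eps gam y x" "regular_point y x t"
    and "- lam / beta < x t \<or> (x t = - lam / beta \<and> y t \<le> gam * lam / eps)"
  shows "\<exists>D. ((\<lambda>s. star_norm beta eps gam (y s, x s)) has_real_derivative D) (at t within {0..})
    \<and> D \<le> - nu1 beta eps gam * star_norm beta eps gam (y t, x t)"
proof -
  note nu = nu1_nu2_properties[OF assms(1-4)]
  have "star_norm beta eps gam = (\<lambda>u. norm (eigen_coords beta (nu1 beta eps gam) (nu2 beta eps gam) u))"
    using star_norm_eq_norm_eigen_coords nu(1,2) assms(1) by fastforce
  then show ?thesis
    using eigen_norm_linear_field_derivative[OF _ nu(2-4) fluid_model_linear_regime[OF assms(1,2,5-7)]]
      assms(1) by simp
qed

lemma star_norm_decay_wall_regime: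
  assumes "lam > 0" "beta > 0" "eps > 0" "gam > 0" "eps < gam\<^sup>2 * beta / 4"
    and "fluid_model lam beta eps gam y x" "regular_point y x t"
    and "x t = - lam / beta" "gam * lam / eps \<le> y t"
  shows "\<exists>D. ((\<lambda>s. star_norm beta eps gam (y s, x s)) has_real_derivative D) (at t within {0..})
    \<and> D \<le> - (lam * eps / (nu2 beta eps gam - nu1 beta eps gam))"
proof -
  let ?n1 = "nu1 beta eps gam" and ?n2 = "nu2 beta eps gam"
  note nu = nu1_nu2_properties[OF assms(2-5)]
  have "star_norm beta eps gam = (\<lambda>u. norm (eigen_coords beta ?n1 ?n2 u))"
    using star_norm_eq_norm_eigen_coords nu(1,2) assms(2) by fastforce
  moreover have "lam * ?n1 * ?n2 / (beta * (?n2 - ?n1)) = lam * eps / (?n2 - ?n1)"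
    unfolding mult.assoc nu(4) using assms(2) by simp
  moreover have "lam < ?n1 * y t"
  proof -
    have "?n1 * (gam * lam / eps) = lam + lam * ?n1 / ?n2"
      using nu assms(2,3) by (simp add: field_simps) (metis distrib_left mult.commute mult.left_commute)
    moreover have "?n1 * (gam * lam / eps) \<le> ?n1 * y t"
      using nu(1) assms(9) by (intro mult_left_mono) auto
    moreover have "0 < lam * ?n1 / ?n2" using nu(1,2) assms(1) by simp
    ultimately show ?thesis by linarith
  qed
  ultimately show ?thesis
    using eigen_norm_wall_derivative[OF assms(2) nu(1,2) assms(1) _ assms(8)
        fluid_model_wall_regime[OF assms(3,6-9)]]
    by simp
qed

lemma star_norm_decay_large:
  assumes "lam > 0" "beta > 0" "eps > 0" "gam > 0" "eps < gam\<^sup>2 * beta / 4"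
    and "fluid_model lam beta eps gam y x" "regular_point y x t"
    and "1 \<le> star_norm beta eps gam (y t, x t)"
  shows "\<exists>D. ((\<lambda>s. star_norm beta eps gam (y s, x s)) has_real_derivative D) (at t within {0..})
    \<and> D \<le> - min (nu1 beta eps gam) (lam * eps / (nu2 beta eps gam - nu1 beta eps gam))"
proof (cases "x t = - lam / beta \<and> gam * lam / eps \<le> y t")
  case True
  then show ?thesis using star_norm_decay_wall_regime[OF assms(1-7)] by force
next
  case False
  then obtain D where D: "((\<lambda>s. star_norm beta eps gam (y s, x s)) has_real_derivative D) (at t within {0..})"
    "D \<le> - nu1 beta eps gam * star_norm beta eps gam (y t, x t)"
    using star_norm_decay_linear_regime[OF assms(2-7)] fluid_model_regimes[OF assms(6,7)] by blast
  moreover have "nu1 beta eps gam \<le> nu1 beta eps gam * star_norm beta eps gam (y t, x t)"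
    using mult_left_mono[OF assms(8)] nu1_nu2_properties[OF assms(2-5)] by simp
  ultimately show ?thesis by force
qed

theorem lemma2:
  fixes lam beta eps gam :: real
  assumes "lam > 0" "beta > 0" "eps > 0" "gam > 0" "eps < gam\<^sup>2 * beta / 4"
  shows
    "(\<exists>\<eta>1>0. \<forall>y x t. fluid_model lam beta eps gam y x \<and> regular_point y x t \<and> x t > - lam / beta \<longrightarrow>
        (\<exists>D. ((\<lambda>s. star_norm beta eps gam (y s, x s)) has_real_derivative D) (at t within {0..}) \<and>
             D \<le> - \<eta>1 * star_norm beta eps gam (y t, x t)))
   \<and> (\<exists>\<eta>2>0. \<forall>y x t. fluid_model lam beta eps gam y x \<and> regular_point y x t \<and>
          x t = - lam / beta \<and> y t \<ge> gam * lam / eps \<longrightarrow>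
        (\<exists>D. ((\<lambda>s. star_norm beta eps gam (y s, x s)) has_real_derivative D) (at t within {0..}) \<and>
             D \<le> - \<eta>2))
   \<and> (\<exists>\<eta>>0. \<exists>C>0. \<forall>y x t. fluid_model lam beta eps gam y x \<and> regular_point y x t \<and>
          star_norm beta eps gam (y t, x t) \<ge> C \<longrightarrow>
        (\<exists>D. ((\<lambda>s. star_norm beta eps gam (y s, x s)) has_real_derivative D) (at t within {0..}) \<and>
             D \<le> - \<eta>))"
proof -
  let ?n1 = "nu1 beta eps gam" and ?n2 = "nu2 beta eps gam"
  have nu: "0 < ?n1" "?n1 < ?n2" using nu1_nu2_properties[OF assms(2-5)] by simp_all
  define \<eta>2 where "\<eta>2 = lam * eps / (?n2 - ?n1)"
  have "0 < \<eta>2" unfolding \<eta>2_def using nu assms(1,3) by simp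
  then have "0 < min ?n1 \<eta>2" using nu(1) by simp
  show ?thesis
    apply (intro conjI)
    subgoal using nu(1) star_norm_decay_linear_regime[OF assms(2-5)] by blast
    subgoal using \<open>0 < \<eta>2\<close> star_norm_decay_wall_regime[OF assms, folded \<eta>2_def] by blast
    subgoal using \<open>0 < min ?n1 \<eta>2\<close> star_norm_decay_large[OF assms, folded \<eta>2_def]
      by (intro exI[of _ "min ?n1 \<eta>2"] conjI exI[of "\<lambda>C. C > 0 \<and> _ C" 1]) auto
    done
qed

end
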